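(* Let $\kappa=(\kappa_1,\dots,\kappa_n)\in\mathbb{R}^n$ and $\xi\in\mathbb{R}^n$. (1) Suppose $\kappa\in\Gamma_{\ell+2}$ and let $i_1,\dots,i_\ell$ be distinct indices. Then $$-\partial^2_\xi q_{2;i_1,\dots,i_\ell}\geq \frac{\big|[\xi]^\perp_{i_1,\dots,i_\ell}\big|^2}{\sigma_1(\kappa|i_1,\dots,i_\ell)}.$$ (2) Suppose $\kappa\in\Gamma_{k+2}$ and let $i_1$ be an index. Then $$-\partial^2_\xi q_{k+1;i_1}\geq -\sum_{i\in\{1,\dots,n\}\setminus\{i_1\}}\frac{\kappa_i^2\,\partial^2_{[\xi]_{i_1,i}}q_k([\kappa]_{i_1,i})}{(k+1)\,(q_{k;i_1,i}+\kappa_i)^2}.$$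
   Context: $\sigma_m$ denotes the $m$-th elementary symmetric polynomial and $\Gamma_m=\{\kappa:\sigma_j(\kappa)>0,\ 1\le j\le m\}$ the Gårding cone. $\sigma_m(\kappa|i_1,\dots,i_r)$ denotes $\sigma_m$ evaluated on $\kappa$ with the entries $\kappa_{i_1},\dots,\kappa_{i_r}$ removed (equivalently set to zero). $q_m=\sigma_m/\sigma_{m-1}$, and $q_{m;i_1,\dots,i_r}(\kappa)=\sigma_m(\kappa|i_1,\dots,i_r)/\sigma_{m-1}(\kappa|i_1,\dots,i_r)$. For a vector $v$, $[v]_{i_1,\dots,i_r}$ denotes the vector obtained by setting its $i_1$-th, ..., $i_r$-th components to zero; $[\xi]^\perp_{i_1,\dots,i_r}$ denotes the component of $[\xi]_{i_1,\dots,i_r}$ orthogonal to $[\kappa]_{i_1,\dots,i_r}$. $\partial_\xi^2 f$ denotes the second directional derivative of $f$ at $\kappa$ in direction $\xi$, i.e. $\sum_{p,q}\frac{\partial^2 f}{\partial\kappa_p\partial\kappa_q}\xi_p\xi_q$; $\partial^2_{[\xi]_{i_1,i}}q_k([\kappa]_{i_1,i})$ is the second derivative of $q_k$ at $[\kappa]_{i_1,i}$ in direction $[\xi]_{i_1,i}$. *)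

theory Defs
  imports "HOL-Analysis.Analysis"
begin

definition sigma :: "nat \<Rightarrow> real^'n \<Rightarrow> real" where
  "sigma m x = (\<Sum>S\<in>{S::'n set. card S = m}. \<Prod>i\<in>S. x $ i)"

definition garding_cone :: "nat \<Rightarrow> (real^'n) set" where
  "garding_cone m = {x. \<forall>j\<in>{1..m}. sigma j x > 0}"

definition zero_out :: "'n set \<Rightarrow> real^'n \<Rightarrow> real^'n" where
  "zero_out I v = (\<chi> i. if i \<in> I then 0 else v $ i)"

definition sigma_del :: "nat \<Rightarrow> 'n set \<Rightarrow> real^'n \<Rightarrow> real" where
  "sigma_del m I x = sigma m (zero_out I x)"

definition q :: "nat \<Rightarrow> real^'n \<Rightarrow> real" where
  "q m x = sigma m x / sigma (m - 1) x"

definition q_del :: "nat \<Rightarrow> 'n set \<Rightarrow> real^'n \<Rightarrow> real" where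
  "q_del m I x = sigma_del m I x / sigma_del (m - 1) I x"

definition perp_part :: "'n set \<Rightarrow> real^'n \<Rightarrow> real^'n \<Rightarrow> real^'n" where
  "perp_part I \<kappa> \<xi> = zero_out I \<xi> -
     ((zero_out I \<xi> \<bullet> zero_out I \<kappa>) / (norm (zero_out I \<kappa>))^2) *\<^sub>R zero_out I \<kappa>"

definition partial :: "'n \<Rightarrow> (real^'n \<Rightarrow> real) \<Rightarrow> real^'n \<Rightarrow> real" where
  "partial p f x = deriv (\<lambda>t. f (x + t *\<^sub>R axis p 1)) 0"

definition d2 :: "(real^'n \<Rightarrow> real) \<Rightarrow> real^'n \<Rightarrow> real^'n \<Rightarrow> real" where
  "d2 f x \<xi> = (\<Sum>p\<in>UNIV. \<Sum>r\<in>UNIV. partial p (partial r f) x * \<xi> $ p * \<xi> $ r)"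

end

theory Submission
  imports Defs "HOL-Computational_Algebra.Polynomial"
begin

text \<open>
  For (1), on the coordinates outside I we have sigma_2 = (sigma_1^2 - |kappa|^2) / 2, so
  q_2 = sigma_1 / 2 - |kappa|^2 / (2 sigma_1). The function |kappa|^2 / sigma_1 is convex with
  second derivative 2 |xi - t kappa|^2 / sigma_1(kappa) in direction xi, where
  t = sigma_1(xi) / sigma_1(kappa), and |xi - t kappa| is at least the length of the component
  of xi orthogonal to kappa.
  For (2), with i_1 deleted throughout, the recursion sigma_k = sigma_k(.|i) + kappa_i sigma_(k-1)(.|i)
  and Euler's identity (k+1) sigma_(k+1) = sum_i kappa_i sigma_k(.|i) give
  q_(k+1) = (k+1)^(-1) sum_i kappa_i q_(k;i) / (kappa_i + q_(k;i)), and the second derivative of a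
  harmonic combination f g / (f + g) is at most (g^2 f'' + f^2 g'') / (f + g)^2 where f + g > 0.
  All denominators are positive because deleting r entries maps Gamma_m into Gamma_(m-r); this
  follows from Newton's inequality sigma_(j-1) sigma_(j+1) <= sigma_j^2, which in turn comes from
  Rolle's theorem applied to the polynomial prod_i (t + kappa_i).
\<close>

section \<open>Elementary symmetric functions\<close>

definition esym :: "'a set \<Rightarrow> ('a \<Rightarrow> real) \<Rightarrow> nat \<Rightarrow> real" where
  "esym S x j = (\<Sum>T | T \<subseteq> S \<and> card T = j. \<Prod>i\<in>T. x i)"

lemma esym_0 [simp]: "finite S \<Longrightarrow> esym S x 0 = 1"
proof -
  assume "finite S"
  then have "{T. T \<subseteq> S \<and> card T = 0} = {{}}"
    by (auto dest: finite_subset)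
  then show ?thesis
    by (simp add: esym_def)
qed

lemma esym_eq_0: "finite S \<Longrightarrow> card S < j \<Longrightarrow> esym S x j = 0"
  unfolding esym_def by (rule sum.neutral) (auto dest: card_mono)

lemma esym_card: "finite S \<Longrightarrow> esym S x (card S) = prod x S"
proof -
  assume "finite S"
  then have "{T. T \<subseteq> S \<and> card T = card S} = {S}"
    using card_subset_eq by auto
  then show ?thesis
    by (simp add: esym_def)
qed

lemma esym_cong: "(\<And>i. i \<in> S \<Longrightarrow> x i = y i) \<Longrightarrow> esym S x j = esym S y j"
  unfolding esym_def by (intro sum.cong refl prod.cong) auto

lemma esym_insert:
  assumes "finite S" "a \<notin> S"
  shows "esym (insert a S) x (Suc j) = esym S x (Suc j) + x a * esym S x j"
proof -
  let ?P = "\<lambda>m. {T. T \<subseteq> S \<and> card T = m}"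
  have split: "{T. T \<subseteq> insert a S \<and> card T = Suc j} = ?P (Suc j) \<union> insert a ` ?P j"
  proof (intro set_eqI iffI)
    fix T assume T: "T \<in> {T. T \<subseteq> insert a S \<and> card T = Suc j}"
    show "T \<in> ?P (Suc j) \<union> insert a ` ?P j"
    proof (cases "a \<in> T")
      case True
      then have "T = insert a (T - {a})" "T - {a} \<in> ?P j"
        using T assms(1) finite_subset[of T "insert a S"] by auto
      then show ?thesis by blast
    qed (use T in auto)
  qed (use assms finite_subset[of _ S] in \<open>auto simp: card_insert_if\<close>)
  have "inj_on (insert a) (?P j)"
    using assms(2) by (auto simp: inj_on_def)
  moreover have "?P (Suc j) \<inter> insert a ` ?P j = {}"
    using assms(2) by auto
  moreover have "\<And>T. T \<in> ?P j \<Longrightarrow> prod x (insert a T) = x a * prod x T"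
    using assms finite_subset by (subst prod.insert) auto
  ultimately show ?thesis
    using assms(1) by (simp add: esym_def split sum.union_disjoint sum.reindex sum_distrib_left)
qed

lemma esym_remove:
  assumes "finite S" "i \<in> S"
  shows "esym S x (Suc j) = esym (S - {i}) x (Suc j) + x i * esym (S - {i}) x j"
  using esym_insert[of "S - {i}" i x j] assms by (simp add: insert_absorb)

lemma esym_1: "finite S \<Longrightarrow> esym S x 1 = sum x S"
  unfolding One_nat_def by (induction S rule: finite_induct) (simp_all add: esym_insert esym_eq_0)

lemma esym_2: "finite S \<Longrightarrow> 2 * esym S x 2 = (sum x S)\<^sup>2 - (\<Sum>i\<in>S. (x i)\<^sup>2)"
proof (induction S rule: finite_induct)
  case (insert a S)
  then have "esym (insert a S) x 2 = esym S x 2 + x a * sum x S"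
    using esym_insert[of S a x 1] esym_1[of S x] by (simp add: numeral_2_eq_2)
  with insert show ?case
    by (simp add: power2_eq_square algebra_simps)
qed (simp add: esym_eq_0)

lemma esym_diff_zeros:
  assumes "finite S" "\<And>i. i \<in> Z \<Longrightarrow> x i = 0"
  shows "esym S x j = esym (S - Z) x j"
  unfolding esym_def
proof (rule sum.mono_neutral_right)
  show "\<forall>T\<in>{T. T \<subseteq> S \<and> card T = j} - {T. T \<subseteq> S - Z \<and> card T = j}. prod x T = 0"
    using assms by (auto intro!: prod_zero dest: finite_subset)
qed (use assms(1) in auto)

lemma esym_euler:
  assumes "finite S"
  shows "real (Suc k) * esym S x (Suc k) = (\<Sum>i\<in>S. x i * esym (S - {i}) x k)"
  using assms
proof (induction S arbitrary: k rule: finite_induct)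
  case (insert a S)
  have minus: "insert a S - {i} = insert a (S - {i})" if "i \<in> S" for i
    using that insert.hyps by auto
  show ?case
  proof (cases k)
    case 0
    then show ?thesis
      using insert.hyps esym_1[of "insert a S" x] by (simp add: esym_1)
  next
    case (Suc k')
    have "(\<Sum>i\<in>insert a S. x i * esym (insert a S - {i}) x k)
        = x a * esym S x k + (\<Sum>i\<in>S. x i * esym (S - {i}) x k)
          + x a * (\<Sum>i\<in>S. x i * esym (S - {i}) x k')"
      using insert.hyps Suc
      by (simp add: minus esym_insert sum.distrib sum_distrib_left algebra_simps cong: sum.cong)
    also have "\<dots> = x a * esym S x k + real (Suc k) * esym S x (Suc k)
          + x a * (real k * esym S x k)"
      using insert.IH[of k] insert.IH[of k'] Suc by simp
    also have "\<dots> = real (Suc k) * esym (insert a S) x (Suc k)"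
      using insert.hyps by (simp add: esym_insert algebra_simps)
    finally show ?thesis ..
  qed
qed (simp add: esym_eq_0)

lemma esym_reindex:
  assumes "bij_betw h A B"
  shows "esym B x j = esym A (x \<circ> h) j"
proof -
  have inj: "inj_on h A"
    using assms by (rule bij_betw_imp_inj_on)
  have "bij_betw (image h) {T. T \<subseteq> A \<and> card T = j} {T. T \<subseteq> B \<and> card T = j}"
  proof (rule bij_betw_subset[OF bij_betw_Pow[OF assms]])
    show "image h ` {T. T \<subseteq> A \<and> card T = j} = {T. T \<subseteq> B \<and> card T = j}"
      using bij_betw_imp_surj_on[OF assms] inj_on_subset[OF inj]
      by (auto simp: subset_image_iff card_image image_mono)
  qed auto
  then show ?thesis
    unfolding esym_def
    by (rule sum.reindex_bij_betw[symmetric, THEN trans])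
       (auto intro!: sum.cong simp: prod.reindex inj_on_subset[OF inj])
qed

lemma esym_card_diff:
  assumes "finite S" "\<And>i. i \<in> S \<Longrightarrow> x i \<noteq> 0" "j \<le> card S"
  shows "esym S x (card S - j) = prod x S * esym S (\<lambda>i. inverse (x i)) j"
proof -
  have "esym S x (card S - j) = (\<Sum>U | U \<subseteq> S \<and> card U = j. \<Prod>i\<in>S - U. x i)"
    unfolding esym_def
  proof (rule sum.reindex_bij_witness[where i="\<lambda>T. S - T" and j="\<lambda>T. S - T"])
    show "S - T \<in> {U. U \<subseteq> S \<and> card U = j}" if "T \<in> {T. T \<subseteq> S \<and> card T = card S - j}" for T
      using that assms(1,3) card_Diff_subset[of T S] finite_subset[of T S] by auto
    show "S - U \<in> {T. T \<subseteq> S \<and> card T = card S - j}" if "U \<in> {U. U \<subseteq> S \<and> card U = j}" for U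
      using that assms(1) card_Diff_subset[of U S] finite_subset[of U S] by auto
  qed (auto simp: double_diff)
  also have "\<dots> = (\<Sum>U | U \<subseteq> S \<and> card U = j. prod x S * (\<Prod>i\<in>U. inverse (x i)))"
  proof (intro sum.cong refl)
    fix U assume "U \<in> {U. U \<subseteq> S \<and> card U = j}"
    then have "U \<subseteq> S" by simp
    then have "prod x S = prod x (S - U) * prod x U"
      using assms(1) by (rule prod.subset_diff)
    moreover have "prod x U * (\<Prod>i\<in>U. inverse (x i)) = 1"
      using \<open>U \<subseteq> S\<close> assms(2) by (auto simp: prod.distrib[symmetric] intro!: prod.neutral)
    ultimately show "(\<Prod>i\<in>S - U. x i) = prod x S * (\<Prod>i\<in>U. inverse (x i))"
      by (metis mult.assoc mult.right_neutral)
  qed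
  also have "\<dots> = prod x S * esym S (\<lambda>i. inverse (x i)) j"
    by (simp add: esym_def sum_distrib_left)
  finally show ?thesis .
qed

section \<open>Newton's inequality\<close>

text \<open>Newton's inequality in the extreme case \<open>j = N - 1\<close>: after factoring out \<open>\<Prod>x\<close>
  it is the Cauchy--Schwarz inequality for the reciprocals \<open>1 / x\<^sub>i\<close>.\<close>

lemma newton_ineq_top:
  assumes "finite S" "card S = N" "2 \<le> N"
  shows "2 * real N * esym S x N * esym S x (N - 2) \<le> real (N - 1) * (esym S x (N - 1))\<^sup>2"
proof (cases "\<exists>i\<in>S. x i = 0")
  case True
  then have "esym S x N = 0"
    using esym_card[OF assms(1), of x] assms(1,2) by simp
  then show ?thesis by simp
next
  case False
  define u where "u i = inverse (x i)" for i
  define P where "P = prod x S"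
  have e1: "esym S x (N - 1) = P * sum u S"
    using esym_card_diff[OF assms(1), of x 1] False assms esym_1[OF assms(1), of u]
    unfolding P_def u_def by auto
  have e2: "esym S x (N - 2) = P * esym S u 2"
    using esym_card_diff[OF assms(1), of x 2] False assms unfolding P_def u_def by auto
  have cs: "(sum u S)\<^sup>2 \<le> real N * (\<Sum>i\<in>S. (u i)\<^sup>2)"
    using Cauchy_Schwarz_ineq_sum[of "\<lambda>i. 1" u S] assms(2) by simp
  have "2 * real N * esym S x N * esym S x (N - 2) = P\<^sup>2 * (real N * (2 * esym S u 2))"
    using esym_card[OF assms(1), of x] assms(2) unfolding e2 P_def
    by (simp add: power2_eq_square algebra_simps)
  also have "\<dots> = P\<^sup>2 * (real N * ((sum u S)\<^sup>2 - (\<Sum>i\<in>S. (u i)\<^sup>2)))"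
    using esym_2[OF assms(1)] by simp
  also have "\<dots> \<le> P\<^sup>2 * (real (N - 1) * (sum u S)\<^sup>2)"
    using cs assms(3) by (intro mult_left_mono) (auto simp: algebra_simps)
  also have "\<dots> = real (N - 1) * (esym S x (N - 1))\<^sup>2"
    unfolding e1 by (simp add: power2_eq_square algebra_simps)
  finally show ?thesis .
qed

lemma coeff_prod_linear_factors:
  assumes "finite S" "j \<le> card S"
  shows "coeff (\<Prod>i\<in>S. [:x i, 1:]) (card S - j) = esym S x j"
  using assms
proof (induction S arbitrary: j rule: finite_induct)
  case (insert a S)
  let ?P = "\<Prod>i\<in>S. [:x i, 1:]"
  have prod: "(\<Prod>i\<in>insert a S. [:x i, 1:]) = smult (x a) ?P + pCons 0 ?P"
    using insert.hyps by simp
  have "degree ?P \<le> card S"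
    using degree_prod_sum_le[OF insert.hyps(1), of "\<lambda>i. [:x i, 1:]"] by simp
  then have top: "coeff ?P (Suc (card S)) = 0"
    by (simp add: coeff_eq_0)
  show ?case
  proof (cases j)
    case 0
    then show ?thesis
      using insert.hyps insert.IH[of 0] by (simp add: prod top)
  next
    case (Suc j')
    have "coeff (pCons 0 ?P) (card S - j') = esym S x (Suc j')"
    proof (cases "j' < card S")
      case True
      then have "card S - j' = Suc (card S - Suc j')" by simp
      then show ?thesis
        using insert.IH[of "Suc j'"] True by simp
    qed (use insert.hyps in \<open>simp add: esym_eq_0\<close>)
    moreover have "coeff ?P (card S - j') = esym S x j'"
      using insert Suc by simp
    ultimately show ?thesis
      using insert.hyps Suc by (simp add: prod esym_insert)
  qed
qed simp

lemma degree_prod_linear_factors: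
  fixes x :: "'a \<Rightarrow> real"
  shows "finite S \<Longrightarrow> degree (\<Prod>i\<in>S. [:x i, 1:]) = card S"
  by (subst degree_prod_sum_eq) auto

text \<open>Rolle's theorem between consecutive roots; keeping the roots of \<open>p'\<close> below the largest
  root of \<open>p\<close> lets the induction add one more.\<close>

lemma pderiv_roots_card:
  fixes p :: "real poly"
  assumes "finite R" "card R = Suc M" "\<And>r. r \<in> R \<Longrightarrow> poly p r = 0"
  shows "\<exists>Z. finite Z \<and> card Z = M \<and> (\<forall>z\<in>Z. poly (pderiv p) z = 0 \<and> z < Max R)"
  using assms
proof (induction M arbitrary: R)
  case (Suc M)
  define m where "m = Max R"
  define R' where "R' = R - {m}"
  have "R \<noteq> {}"
    using Suc.prems(2) by auto
  then have "m \<in> R"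
    unfolding m_def using Suc.prems(1) by simp
  then have R': "finite R'" "card R' = Suc M" "R' \<subseteq> R"
    unfolding R'_def using Suc.prems(1,2) by auto
  then have "R' \<noteq> {}"
    by auto
  then have "Max R' \<in> R'"
    using R'(1) by simp
  moreover have "Max R' \<le> m"
    unfolding m_def using \<open>Max R' \<in> R'\<close> R'(3) Suc.prems(1) by auto
  ultimately have "Max R' < m"
    unfolding R'_def by auto
  obtain Z where Z: "finite Z" "card Z = M" "\<And>z. z \<in> Z \<Longrightarrow> poly (pderiv p) z = 0 \<and> z < Max R'"
    using Suc.IH[OF R'(1,2)] Suc.prems(3) R'(3) by blast
  obtain z where z: "Max R' < z" "z < m"
    and mvt: "poly p m - poly p (Max R') = (m - Max R') * poly (pderiv p) z"
    using poly_MVT[OF \<open>Max R' < m\<close>] by blast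
  have "poly (pderiv p) z = 0"
    using mvt Suc.prems(3) \<open>m \<in> R\<close> \<open>Max R' \<in> R'\<close> R'(3) \<open>Max R' < m\<close> by auto
  moreover have "z \<notin> Z"
    using Z(3) z(1) by force
  moreover have "\<forall>w\<in>Z. w < m"
    using Z(3) \<open>Max R' < m\<close> by force
  ultimately show ?case
    using Z(1,2) Z(3) z(2) unfolding m_def by (intro exI[of _ "insert z Z"]) simp
qed auto

lemma poly_eq_prod_linear_factors:
  fixes p :: "real poly"
  assumes "finite W" "card W = degree p" "\<And>w. w \<in> W \<Longrightarrow> poly p (- w) = 0"
  shows "p = smult (lead_coeff p) (\<Prod>w\<in>W. [:w, 1:])"
proof (rule ccontr)
  define D where "D = p - smult (lead_coeff p) (\<Prod>w\<in>W. [:w, 1:])"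
  assume "p \<noteq> smult (lead_coeff p) (\<Prod>w\<in>W. [:w, 1:])"
  then have "D \<noteq> 0"
    unfolding D_def by simp
  have "degree (smult (lead_coeff p) (\<Prod>w\<in>W. [:w, 1:])) \<le> degree p"
    using degree_smult_le[of "lead_coeff p" "\<Prod>w\<in>W. [:w, 1:]"]
      degree_prod_linear_factors[OF assms(1), of "\<lambda>w. w"] assms(2) by simp
  then have "degree D \<le> degree p"
    unfolding D_def by (simp add: degree_diff_le)
  moreover have "coeff D (degree p) = 0"
    using coeff_prod_linear_factors[OF assms(1), of 0] assms(1,2) unfolding D_def by simp
  then have "degree D \<noteq> degree p"
    using \<open>D \<noteq> 0\<close> leading_coeff_0_iff[of D] by metis
  ultimately have "degree D < card W"
    using assms(2) by simp
  have "poly (\<Prod>w'\<in>W. [:w', 1:]) (- w) = 0" if "w \<in> W" for w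
    unfolding poly_prod using that assms(1) by (intro prod_zero) auto
  then have "uminus ` W \<subseteq> {t. poly D t = 0}"
    using assms(3) unfolding D_def by auto
  then have "card (uminus ` W) \<le> card {t. poly D t = 0}"
    by (rule card_mono[OF poly_roots_finite[OF \<open>D \<noteq> 0\<close>]])
  also have "\<dots> \<le> degree D"
    by (rule card_poly_roots_bound[OF \<open>D \<noteq> 0\<close>])
  finally show False
    using \<open>degree D < card W\<close> by (simp add: card_image)
qed

text \<open>\<open>W\<close> consists of the negated roots of the derivative of \<open>\<Prod>\<^sub>r\<^sub>\<in>\<^sub>R (X + r)\<close>; both
  sides are the coefficient of \<open>X\<^sup>M\<^sup>-\<^sup>j\<close> in that derivative.\<close>

lemma esym_pderiv_roots:
  fixes R :: "real set"
  assumes "finite R" "card R = Suc M"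
  shows "\<exists>W. finite W \<and> card W = M \<and>
    (\<forall>j\<le>M. real (Suc M - j) * esym R (\<lambda>r. r) j = real (Suc M) * esym W (\<lambda>r. r) j)"
proof -
  define f where "f = (\<Prod>r\<in>R. [:r, 1:])"
  have coeff_f: "coeff f (Suc M - j) = esym R (\<lambda>r. r) j" if "j \<le> Suc M" for j
    using coeff_prod_linear_factors[OF assms(1), of j "\<lambda>r. r"] that assms(2) unfolding f_def by simp
  have "poly f (- r) = 0" if "r \<in> R" for r
    unfolding f_def poly_prod using that assms(1) by (intro prod_zero) auto
  moreover have "card (uminus ` R) = Suc M"
    using assms(2) by (simp add: card_image)
  ultimately obtain Z where Z: "finite Z" "card Z = M" "\<And>z. z \<in> Z \<Longrightarrow> poly (pderiv f) z = 0"
    using pderiv_roots_card[of "uminus ` R" M f] assms(1) by auto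
  define W where "W = uminus ` Z"
  have W: "finite W" "card W = M"
    unfolding W_def using Z(1,2) by (simp_all add: card_image)
  have deg: "degree (pderiv f) = M"
    using degree_prod_linear_factors[OF assms(1), of "\<lambda>r. r"] assms(2) by (simp add: f_def degree_pderiv)
  have "lead_coeff (pderiv f) = real (Suc M)"
    using coeff_f[of 0] assms(1) by (simp add: deg coeff_pderiv)
  moreover have "pderiv f = smult (lead_coeff (pderiv f)) (\<Prod>w\<in>W. [:w, 1:])"
    using W deg Z(3) by (intro poly_eq_prod_linear_factors) (auto simp: W_def)
  ultimately have pderiv_f: "pderiv f = smult (real (Suc M)) (\<Prod>w\<in>W. [:w, 1:])"
    by simp
  have "real (Suc M - j) * esym R (\<lambda>r. r) j = real (Suc M) * esym W (\<lambda>r. r) j" if "j \<le> M" for j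
  proof -
    have "real (Suc M - j) * esym R (\<lambda>r. r) j = coeff (pderiv f) (M - j)"
      using that coeff_f[of j] by (simp add: coeff_pderiv Suc_diff_le)
    also have "\<dots> = real (Suc M) * esym W (\<lambda>r. r) j"
      using coeff_prod_linear_factors[OF W(1), of j "\<lambda>r. r"] that W(2) by (simp add: pderiv_f)
    finally show ?thesis .
  qed
  with W show ?thesis by blast
qed

lemma newton_ineq_step:
  fixes A B C A' B' C' N j m :: real
  assumes "m \<ge> 2" "N > 0" "j \<ge> 1"
    and "(m + 1) * A = N * A'" "m * B = N * B'" "(m - 1) * C = N * C'"
    and "(j + 1) * m * (A' * C') \<le> j * (m - 1) * B'\<^sup>2"
  shows "(j + 1) * (m + 1) * (A * C) \<le> j * m * B\<^sup>2"
proof -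
  have m: "m + 1 \<noteq> 0" "m - 1 \<noteq> 0" "m \<noteq> 0"
    using assms(1) by auto
  have A: "A = N * A' / (m + 1)" and B: "B = N * B' / m" and C: "C = N * C' / (m - 1)"
    using m assms(4-6) by (simp_all add: field_simps)
  have "(j + 1) * (m + 1) * (A * C) = (j + 1) * (N * A') * (N * C') / (m - 1)"
    unfolding A C using m by simp
  also have "\<dots> = (N\<^sup>2 / (m * (m - 1))) * ((j + 1) * m * (A' * C'))"
    using m by (simp add: power2_eq_square)
  also have "\<dots> \<le> (N\<^sup>2 / (m * (m - 1))) * (j * (m - 1) * B'\<^sup>2)"
    using assms(1,7) by (intro mult_left_mono) auto
  also have "\<dots> = j * m * B\<^sup>2"
    using m unfolding B by (simp add: field_simps power2_eq_square)
  finally show ?thesis .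
qed

text \<open>Newton's inequality for distinct numbers, by induction on their number: for \<open>j + 1 < N\<close>
  the polynomial \<open>\<Prod>(X + r)\<close> is replaced by its derivative, whose roots are again real
  and distinct.\<close>

lemma newton_ineq_distinct:
  fixes R :: "real set"
  assumes "finite R" "1 \<le> j" "j + 1 \<le> card R"
  shows "real (j + 1) * real (card R - j + 1) * (esym R (\<lambda>r. r) (j - 1) * esym R (\<lambda>r. r) (j + 1))
    \<le> real j * real (card R - j) * (esym R (\<lambda>r. r) j)\<^sup>2"
  using assms
proof (induction "card R" arbitrary: R j)
  case (Suc M)
  let ?e = "esym R (\<lambda>r. r)"
  show ?case
  proof (cases "j = M")
    case True
    then show ?thesis
      using newton_ineq_top[OF Suc.prems(1) Suc.hyps(2)[symmetric], of "\<lambda>r. r"] Suc.prems(2)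
      by (simp add: Suc.hyps(2)[symmetric] numeral_2_eq_2 algebra_simps)
  next
    case False
    then have jM: "j + 1 \<le> M"
      using Suc.prems(3) Suc.hyps(2) by simp
    obtain W where W: "finite W" "card W = M"
      and rel: "\<And>i. i \<le> M \<Longrightarrow> real (Suc M - i) * ?e i = real (Suc M) * esym W (\<lambda>r. r) i"
      using esym_pderiv_roots[OF Suc.prems(1) Suc.hyps(2)[symmetric]] by blast
    define m where "m = real (Suc M - j)"
    have "(m + 1) * ?e (j - 1) = real (Suc M) * esym W (\<lambda>r. r) (j - 1)"
      using rel[of "j - 1"] jM Suc.prems(2) by (simp add: m_def add_diff_eq)
    moreover have "m * ?e j = real (Suc M) * esym W (\<lambda>r. r) j"
      using rel[of j] jM by (simp add: m_def)
    moreover have "(m - 1) * ?e (j + 1) = real (Suc M) * esym W (\<lambda>r. r) (j + 1)"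
      using rel[of "j + 1"] jM by (simp add: m_def)
    moreover have "(real j + 1) * m * (esym W (\<lambda>r. r) (j - 1) * esym W (\<lambda>r. r) (j + 1))
        \<le> real j * (m - 1) * (esym W (\<lambda>r. r) j)\<^sup>2"
      using Suc.hyps(1)[OF W(2)[symmetric] W(1) Suc.prems(2)] W(2) jM
      by (simp add: m_def add_diff_eq add.commute)
    ultimately have "(real j + 1) * (m + 1) * (?e (j - 1) * ?e (j + 1)) \<le> real j * m * (?e j)\<^sup>2"
      using Suc.prems(2) jM by (intro newton_ineq_step) (auto simp: m_def)
    then show ?thesis
      using jM Suc.hyps(2) by (simp add: m_def add_diff_eq add.commute)
  qed
qed simp

lemma tendsto_esym:
  assumes "finite S" "\<And>i. i \<in> S \<Longrightarrow> ((\<lambda>e. y e i) \<longlongrightarrow> x i) F"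
  shows "((\<lambda>e. esym S (y e) k) \<longlongrightarrow> esym S x k) F"
  unfolding esym_def using assms by (auto intro!: tendsto_sum tendsto_prod)

lemma eventually_inj_on_perturbation:
  fixes x h :: "'a \<Rightarrow> real"
  assumes "finite S" "inj_on h S"
  shows "\<forall>\<^sub>F e in at_right 0. inj_on (\<lambda>i. x i + e * h i) S"
proof -
  define bad where "bad = (\<lambda>(i, l). (x l - x i) / (h i - h l)) ` (S \<times> S)"
  have inj: "inj_on (\<lambda>i. x i + e * h i) S" if "e \<notin> bad" for e
  proof (rule inj_onI)
    fix i l assume il: "i \<in> S" "l \<in> S" "x i + e * h i = x l + e * h l"
    show "i = l"
    proof (rule ccontr)
      assume "i \<noteq> l"
      then have "h i - h l \<noteq> 0"
        using assms(2) il(1,2) by (auto dest: inj_onD)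
      then have "e = (x l - x i) / (h i - h l)"
        using il(3) by (simp add: field_simps)
      then show False
        using that il(1,2) unfolding bad_def by force
    qed
  qed
  have "\<forall>\<^sub>F e in at_right 0. \<forall>b\<in>bad. e \<noteq> b"
    unfolding bad_def using assms(1) by (intro eventually_ball_finite ballI eventually_neq_at_within) auto
  then show ?thesis
    by (rule eventually_mono) (auto intro: inj)
qed

text \<open>The general case follows by the perturbation \<open>x\<^sub>i + \<epsilon> h\<^sub>i\<close> with \<open>h\<close> injective,
  which makes the entries distinct for all but finitely many \<open>\<epsilon>\<close>.\<close>

lemma newton_ineq:
  assumes "finite S" "1 \<le> j" "j + 1 \<le> card S"
  shows "real (j + 1) * real (card S - j + 1) * (esym S x (j - 1) * esym S x (j + 1))
    \<le> real j * real (card S - j) * (esym S x j)\<^sup>2"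
proof -
  define gap where "gap y = real j * real (card S - j) * (esym S y j)\<^sup>2
    - real (j + 1) * real (card S - j + 1) * (esym S y (j - 1) * esym S y (j + 1))" for y
  obtain h :: "'a \<Rightarrow> nat" where "inj_on h S"
    using finite_imp_inj_to_nat_seg[OF assms(1)] by blast
  then have "inj_on (\<lambda>i. real (h i)) S"
    by (auto simp: inj_on_def)
  define y where "y e = (\<lambda>i. x i + e * real (h i))" for e
  have nonneg: "gap (y e) \<ge> 0" if "inj_on (y e) S" for e
    using newton_ineq_distinct[of "y e ` S" j] esym_reindex[of "y e" S "y e ` S" "\<lambda>r. r"] that assms
    by (simp add: gap_def inj_on_imp_bij_betw card_image o_def)
  have "\<forall>\<^sub>F e in at_right 0. inj_on (y e) S"
    using eventually_inj_on_perturbation[OF assms(1) \<open>inj_on (\<lambda>i. real (h i)) S\<close>, of x]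
    by (simp add: y_def)
  then have ev: "\<forall>\<^sub>F e in at_right 0. gap (y e) \<ge> 0"
    by (rule eventually_mono) (rule nonneg)
  have "((\<lambda>e. y e i) \<longlongrightarrow> x i + 0 * real (h i)) (at_right 0)" for i
    unfolding y_def by (intro tendsto_intros)
  then have "((\<lambda>e. esym S (y e) k) \<longlongrightarrow> esym S x k) (at_right 0)" for k
    using assms(1) by (intro tendsto_esym) auto
  then have "((\<lambda>e. gap (y e)) \<longlongrightarrow> gap x) (at_right 0)"
    unfolding gap_def by (intro tendsto_diff tendsto_mult tendsto_power tendsto_const)
  from tendsto_lowerbound[OF this ev] have "0 \<le> gap x"
    by simp
  then show ?thesis
    unfolding gap_def by simp
qed

lemma esym_newton:
  assumes "finite S" "1 \<le> j"
  shows "esym S x (j - 1) * esym S x (j + 1) \<le> (esym S x j)\<^sup>2"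
proof (cases "j + 1 \<le> card S \<and> esym S x (j - 1) * esym S x (j + 1) > 0")
  case True
  let ?A = "esym S x (j - 1) * esym S x (j + 1)"
  have "real j * real (card S - j) * ?A \<le> real (j + 1) * real (card S - j + 1) * ?A"
    using True by (intro mult_right_mono mult_mono) auto
  also have "\<dots> \<le> real j * real (card S - j) * (esym S x j)\<^sup>2"
    using True by (intro newton_ineq assms) simp
  finally show ?thesis
    using assms(2) True by (simp add: mult_le_cancel_left_pos)
next
  case False
  then show ?thesis
    using assms(1) by (auto simp: esym_eq_0 intro: order_trans[OF _ zero_le_power2])
qed

section \<open>Deleting entries from a Garding cone\<close>

definition esym_pos_upto :: "nat \<Rightarrow> 'a set \<Rightarrow> ('a \<Rightarrow> real) \<Rightarrow> bool" where
  "esym_pos_upto m S x \<longleftrightarrow> (\<forall>j\<in>{1..m}. esym S x j > 0)"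

text \<open>If \<open>e\<^sub>j(x|i) > 0 \<ge> e\<^sub>j\<^sub>+\<^sub>1(x|i)\<close> while \<open>e\<^sub>j\<^sub>+\<^sub>1(x), e\<^sub>j\<^sub>+\<^sub>2(x) > 0\<close>, then
  \<open>x\<^sub>i > 0\<close> and \<open>e\<^sub>j(x|i) e\<^sub>j\<^sub>+\<^sub>2(x|i) > e\<^sub>j\<^sub>+\<^sub>1(x|i)\<^sup>2\<close>, contradicting Newton's inequality.\<close>

lemma esym_pos_upto_remove:
  assumes "finite S" "i \<in> S" "esym_pos_upto m S x"
  shows "esym_pos_upto (m - 1) (S - {i}) x"
proof -
  let ?e = "esym (S - {i}) x"
  have rec: "esym S x (Suc k) = ?e (Suc k) + x i * ?e k" for k
    using esym_remove[OF assms(1,2)] .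
  have "j \<le> m - 1 \<Longrightarrow> ?e j > 0" for j
  proof (induction j)
    case (Suc j)
    show ?case
    proof (rule ccontr)
      assume "\<not> ?e (Suc j) > 0"
      then have neg: "- ?e (Suc j) \<ge> 0"
        by simp
      have pos: "?e j > 0"
        using Suc by simp
      have sum_pos: "?e (Suc j) + x i * ?e j > 0" "?e (Suc (Suc j)) + x i * ?e (Suc j) > 0"
        using assms(3) Suc.prems unfolding esym_pos_upto_def rec[symmetric] by auto
      have "(?e (Suc j))\<^sup>2 = (- ?e (Suc j)) * (- ?e (Suc j))"
        by (simp add: power2_eq_square)
      also have "\<dots> \<le> (- ?e (Suc j)) * (x i * ?e j)"
        using neg sum_pos(1) by (intro mult_left_mono) auto
      also have "\<dots> = ?e j * (- (x i * ?e (Suc j)))"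
        by (simp add: algebra_simps)
      also have "\<dots> < ?e j * ?e (Suc (Suc j))"
        using pos sum_pos(2) by (intro mult_strict_left_mono) auto
      finally have "?e j * ?e (Suc (Suc j)) > (?e (Suc j))\<^sup>2" .
      moreover have "?e j * ?e (Suc (Suc j)) \<le> (?e (Suc j))\<^sup>2"
        using esym_newton[of "S - {i}" "Suc j" x] assms(1) by simp
      ultimately show False
        by simp
    qed
  qed (use assms(1) in simp)
  then show ?thesis
    unfolding esym_pos_upto_def by auto
qed

lemma esym_pos_upto_diff:
  assumes "finite S" "I \<subseteq> S" "esym_pos_upto m S x"
  shows "esym_pos_upto (m - card I) (S - I) x"
proof -
  have "finite I"
    using assms(1,2) by (rule finite_subset[rotated])
  then show ?thesis
    using assms(2,3)
  proof (induction I rule: finite_induct)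
    case (insert a I)
    then have "esym_pos_upto (m - card I - 1) (S - I - {a}) x"
      using esym_pos_upto_remove[of "S - I" a "m - card I" x] assms(1) by auto
    moreover have "S - I - {a} = S - insert a I"
      by auto
    ultimately show ?case
      using insert.hyps by simp
  qed simp
qed

lemma sigma_eq_esym: "sigma m \<kappa> = esym UNIV (\<lambda>i. \<kappa> $ i) m"
  unfolding sigma_def esym_def by simp

lemma sigma_del_eq_esym: "sigma_del m I \<kappa> = esym (UNIV - I) (\<lambda>i. \<kappa> $ i) m"
proof -
  have "sigma_del m I \<kappa> = esym (UNIV - I) (\<lambda>i. zero_out I \<kappa> $ i) m"
    unfolding sigma_del_def sigma_eq_esym by (rule esym_diff_zeros) (auto simp: zero_out_def)
  also have "\<dots> = esym (UNIV - I) (\<lambda>i. \<kappa> $ i) m"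
    by (rule esym_cong) (simp add: zero_out_def)
  finally show ?thesis .
qed

lemma sigma_del_pos:
  assumes "\<kappa> \<in> garding_cone m" "j + card I \<le> m"
  shows "sigma_del j I \<kappa> > 0"
proof (cases j)
  case (Suc j')
  have "esym_pos_upto m UNIV (\<lambda>i. \<kappa> $ i)"
    using assms(1) unfolding garding_cone_def esym_pos_upto_def sigma_eq_esym by simp
  then have "esym_pos_upto (m - card I) (UNIV - I) (\<lambda>i. \<kappa> $ i)"
    by (rule esym_pos_upto_diff[rotated 2]) auto
  then show ?thesis
    using assms(2) Suc unfolding esym_pos_upto_def sigma_del_eq_esym by simp
qed (simp add: sigma_del_eq_esym)

section \<open>Second derivatives\<close>

text \<open>The first and second derivatives are carried along explicitly, so that the calculus rules
  below compute second directional derivatives symbolically.\<close>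

definition has_second_derivative ::
    "('a::real_normed_vector \<Rightarrow> real) \<Rightarrow> ('a \<Rightarrow> 'a \<Rightarrow> real) \<Rightarrow> ('a \<Rightarrow> 'a \<Rightarrow> real) \<Rightarrow> 'a \<Rightarrow> bool"
  where "has_second_derivative f f' f'' x \<longleftrightarrow>
    (\<forall>\<^sub>F y in nhds x. (f has_derivative f' y) (at y)) \<and>
    (\<forall>v. ((\<lambda>y. f' y v) has_derivative (\<lambda>w. f'' w v)) (at x))"

definition twice_differentiable_at :: "('a::real_normed_vector \<Rightarrow> real) \<Rightarrow> 'a \<Rightarrow> bool" where
  "twice_differentiable_at f x \<longleftrightarrow> (\<exists>f' f''. has_second_derivative f f' f'' x)"

lemma has_second_derivative_imp_has_derivative:
  "has_second_derivative f f' f'' x \<Longrightarrow> (f has_derivative f' x) (at x)"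
  unfolding has_second_derivative_def using eventually_nhds_x_imp_x by blast

lemma has_second_derivative_const: "has_second_derivative (\<lambda>y. c) (\<lambda>y v. 0) (\<lambda>w v. 0) x"
  unfolding has_second_derivative_def by simp

lemma has_second_derivative_linear:
  "bounded_linear f \<Longrightarrow> has_second_derivative f (\<lambda>y. f) (\<lambda>w v. 0) x"
  unfolding has_second_derivative_def by (simp add: bounded_linear_imp_has_derivative)

lemma has_second_derivative_add:
  assumes "has_second_derivative f f' f'' x" "has_second_derivative g g' g'' x"
  shows "has_second_derivative (\<lambda>y. f y + g y) (\<lambda>y v. f' y v + g' y v) (\<lambda>w v. f'' w v + g'' w v) x"
  using assms unfolding has_second_derivative_def
  by (auto intro: has_derivative_add elim: eventually_elim2)

lemma has_second_derivative_cmult: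
  assumes "has_second_derivative f f' f'' x"
  shows "has_second_derivative (\<lambda>y. c * f y) (\<lambda>y v. c * f' y v) (\<lambda>w v. c * f'' w v) x"
  using assms unfolding has_second_derivative_def
  by (auto intro: has_derivative_mult_right elim: eventually_mono)

lemma has_second_derivative_sum:
  assumes "finite A" "\<And>i. i \<in> A \<Longrightarrow> has_second_derivative (f i) (f' i) (f'' i) x"
  shows "has_second_derivative (\<lambda>y. \<Sum>i\<in>A. f i y) (\<lambda>y v. \<Sum>i\<in>A. f' i y v) (\<lambda>w v. \<Sum>i\<in>A. f'' i w v) x"
  using assms
  by (induction A rule: finite_induct) (auto intro: has_second_derivative_const has_second_derivative_add)

lemma has_second_derivative_mult:
  assumes f: "has_second_derivative f f' f'' x" and g: "has_second_derivative g g' g'' x"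
  shows "has_second_derivative (\<lambda>y. f y * g y) (\<lambda>y v. f y * g' y v + f' y v * g y)
     (\<lambda>w v. f' x w * g' x v + f' x v * g' x w + f x * g'' w v + g x * f'' w v) x"
  unfolding has_second_derivative_def
proof
  show "\<forall>\<^sub>F y in nhds x. ((\<lambda>y. f y * g y) has_derivative (\<lambda>v. f y * g' y v + f' y v * g y)) (at y)"
    using f g unfolding has_second_derivative_def by (auto intro: has_derivative_mult elim: eventually_elim2)
  show "\<forall>v. ((\<lambda>y. f y * g' y v + f' y v * g y) has_derivative
      (\<lambda>w. f' x w * g' x v + f' x v * g' x w + f x * g'' w v + g x * f'' w v)) (at x)"
  proof
    fix v
    have "((\<lambda>y. f y * g' y v + f' y v * g y) has_derivative
      (\<lambda>w. (f x * g'' w v + f' x w * g' x v) + (f' x v * g' x w + f'' w v * g x))) (at x)"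
      using f g has_second_derivative_imp_has_derivative[OF f] has_second_derivative_imp_has_derivative[OF g]
      unfolding has_second_derivative_def by (intro has_derivative_add has_derivative_mult) auto
    then show "((\<lambda>y. f y * g' y v + f' y v * g y) has_derivative
      (\<lambda>w. f' x w * g' x v + f' x v * g' x w + f x * g'' w v + g x * f'' w v)) (at x)"
      by (rule has_derivative_eq_rhs) (auto simp: fun_eq_iff algebra_simps)
  qed
qed

lemma has_second_derivative_inverse:
  assumes f: "has_second_derivative f f' f'' x" and nz: "f x \<noteq> 0"
  shows "has_second_derivative (\<lambda>y. inverse (f y)) (\<lambda>y v. - f' y v / (f y)\<^sup>2)
     (\<lambda>w v. (2 * f' x w * f' x v - f x * f'' w v) / (f x) ^ 3) x"
  unfolding has_second_derivative_def
proof
  have fx: "(f has_derivative f' x) (at x)"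
    using f by (rule has_second_derivative_imp_has_derivative)
  then have "isCont f x"
    by (rule has_derivative_continuous)
  then have "\<forall>\<^sub>F y in at x. f y \<noteq> 0"
    using nz unfolding isCont_def by (rule tendsto_imp_eventually_ne)
  then have "\<forall>\<^sub>F y in nhds x. f y \<noteq> 0"
    using nz by (simp add: eventually_nhds_conv_at)
  moreover have "\<forall>\<^sub>F y in nhds x. (f has_derivative f' y) (at y)"
    using f unfolding has_second_derivative_def by blast
  ultimately show "\<forall>\<^sub>F y in nhds x. ((\<lambda>y. inverse (f y)) has_derivative (\<lambda>v. - f' y v / (f y)\<^sup>2)) (at y)"
  proof eventually_elim
    case (elim y)
    then have "((\<lambda>y. inverse (f y)) has_derivative (\<lambda>h. - (inverse (f y) * f' y h * inverse (f y)))) (at y)"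
      by (intro Deriv.has_derivative_inverse) auto
    then show ?case
      by (rule has_derivative_eq_rhs) (auto simp: fun_eq_iff field_simps power2_eq_square)
  qed
  show "\<forall>v. ((\<lambda>y. - f' y v / (f y)\<^sup>2) has_derivative
     (\<lambda>w. (2 * f' x w * f' x v - f x * f'' w v) / (f x) ^ 3)) (at x)"
  proof
    fix v
    have "((\<lambda>y. - f' y v * inverse (f y * f y)) has_derivative
       (\<lambda>w. - f' x v * (- (inverse (f x * f x) * (f x * f' x w + f' x w * f x) * inverse (f x * f x)))
            + - f'' w v * inverse (f x * f x))) (at x)"
      using f fx nz unfolding has_second_derivative_def
      by (intro has_derivative_mult has_derivative_minus Deriv.has_derivative_inverse) auto
    moreover have "(\<lambda>y. - f' y v * inverse (f y * f y)) = (\<lambda>y. - f' y v / (f y)\<^sup>2)"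
      by (auto simp: fun_eq_iff field_simps power2_eq_square)
    ultimately show "((\<lambda>y. - f' y v / (f y)\<^sup>2) has_derivative
       (\<lambda>w. (2 * f' x w * f' x v - f x * f'' w v) / (f x) ^ 3)) (at x)"
      using nz by (auto elim!: has_derivative_eq_rhs simp: fun_eq_iff field_simps power2_eq_square power3_eq_cube)
  qed
qed

lemma has_second_derivative_transform:
  assumes g: "has_second_derivative g f' f'' x" and ev: "\<forall>\<^sub>F y in nhds x. f y = g y"
  shows "has_second_derivative f f' f'' x"
  unfolding has_second_derivative_def
proof
  have "\<forall>\<^sub>F y in nhds x. \<forall>\<^sub>F z in nhds y. f z = g z"
    using ev unfolding eventually_eventually .
  then show "\<forall>\<^sub>F y in nhds x. (f has_derivative f' y) (at y)"
    using g[unfolded has_second_derivative_def, THEN conjunct1]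
  proof eventually_elim
    case (elim y)
    then show ?case
      by (auto intro: has_derivative_transform_eventually[OF elim(2)] simp: eventually_nhds_conv_at eq_commute)
  qed
  show "\<forall>v. ((\<lambda>y. f' y v) has_derivative (\<lambda>w. f'' w v)) (at x)"
    using g unfolding has_second_derivative_def by blast
qed

lemma has_second_derivative_compose_linear:
  assumes L: "bounded_linear L" and f: "has_second_derivative f f' f'' (L x)"
  shows "has_second_derivative (\<lambda>y. f (L y)) (\<lambda>y v. f' (L y) (L v)) (\<lambda>w v. f'' (L w) (L v)) x"
  unfolding has_second_derivative_def
proof
  have "filterlim L (nhds (L x)) (nhds x)"
    using bounded_linear.tendsto[OF L filterlim_ident] by simp
  then have "\<forall>\<^sub>F y in nhds x. (f has_derivative f' (L y)) (at (L y))"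
    using eventually_compose_filterlim f unfolding has_second_derivative_def by blast
  then show "\<forall>\<^sub>F y in nhds x. ((\<lambda>y. f (L y)) has_derivative (\<lambda>v. f' (L y) (L v))) (at y)"
    by (rule eventually_mono)
       (rule has_derivative_compose[OF bounded_linear_imp_has_derivative[OF L], unfolded o_def])
  show "\<forall>v. ((\<lambda>y. f' (L y) (L v)) has_derivative (\<lambda>w. f'' (L w) (L v))) (at x)"
    using f unfolding has_second_derivative_def
    by (auto intro: has_derivative_compose[OF bounded_linear_imp_has_derivative[OF L], unfolded o_def])
qed

lemma has_second_derivative_linear_right:
  assumes "has_second_derivative f f' f'' x"
  shows "linear (f'' w)"
proof -
  have ev: "\<forall>\<^sub>F y in nhds x. linear (f' y)"
    using assms unfolding has_second_derivative_def by (auto elim: eventually_mono dest: has_derivative_linear)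
  have D: "((\<lambda>y. f' y v) has_derivative (\<lambda>w. f'' w v)) (at x)" for v
    using assms unfolding has_second_derivative_def by blast
  have transform: "((\<lambda>y. f' y u) has_derivative F) (at x)"
    if "((\<lambda>y. h y) has_derivative F) (at x)" "\<And>y. linear (f' y) \<Longrightarrow> h y = f' y u" for h F u
  proof (rule has_derivative_transform_eventually[OF that(1)])
    have "\<forall>\<^sub>F y in nhds x. h y = f' y u"
      using ev by (rule eventually_mono) (rule that(2))
    then show "\<forall>\<^sub>F y in at x. h y = f' y u" "h x = f' x u"
      by (simp_all add: eventually_nhds_conv_at)
  qed simp
  have "f'' w (u + v) = f'' w u + f'' w v" for u v
    using has_derivative_unique[OF D[of "u + v"] transform[OF has_derivative_add[OF D[of u] D[of v]]]]
    by (metis linear_add)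
  moreover have "f'' w (c *\<^sub>R v) = c *\<^sub>R f'' w v" for c v
    using has_derivative_unique[OF D[of "c *\<^sub>R v"] transform[OF has_derivative_mult_right[OF D[of v]]]]
    by (metis linear_scale real_scaleR_def)
  ultimately show ?thesis
    by (rule linearI)
qed

lemma partial_eq:
  assumes "(f has_derivative f') (at y)"
  shows "partial r f y = f' (axis r 1)"
proof -
  have "((\<lambda>t. y + t *\<^sub>R axis r 1) has_derivative (\<lambda>t. t *\<^sub>R axis r 1)) (at 0)"
    by (intro derivative_eq_intros) auto
  moreover have "(f has_derivative f') (at (y + 0 *\<^sub>R axis r 1))"
    using assms by simp
  ultimately have "((\<lambda>t. f (y + t *\<^sub>R axis r 1)) has_derivative (\<lambda>t. f' (t *\<^sub>R axis r 1))) (at 0)"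
    by (rule has_derivative_compose)
  moreover have "(\<lambda>t. f' (t *\<^sub>R axis r 1)) = (\<lambda>t. f' (axis r 1) * t)"
    using linear_scale[OF has_derivative_linear[OF assms]] by (auto simp: mult.commute)
  ultimately have "((\<lambda>t. f (y + t *\<^sub>R axis r 1)) has_field_derivative f' (axis r 1)) (at 0)"
    unfolding has_field_derivative_def by simp
  then show ?thesis
    unfolding partial_def by (rule DERIV_imp_deriv)
qed

lemma partial_partial_eq:
  assumes "has_second_derivative f f' f'' x"
  shows "partial p (partial r f) x = f'' (axis p 1) (axis r 1)"
proof -
  have "\<forall>\<^sub>F y in nhds x. partial r f y = f' y (axis r 1)"
    using assms unfolding has_second_derivative_def by (auto elim: eventually_mono intro: partial_eq)
  then have "\<forall>\<^sub>F y in nhds x. f' y (axis r 1) = partial r f y"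
    by (simp add: eq_commute)
  moreover have "((\<lambda>y. f' y (axis r 1)) has_derivative (\<lambda>w. f'' w (axis r 1))) (at x)"
    using assms unfolding has_second_derivative_def by blast
  ultimately have "(partial r f has_derivative (\<lambda>w. f'' w (axis r 1))) (at x)"
    by (auto intro: has_derivative_transform_eventually simp: eventually_nhds_conv_at)
  then show ?thesis
    by (rule partial_eq)
qed

lemma d2_eq:
  assumes "has_second_derivative f f' f'' x"
  shows "d2 f x \<xi> = f'' \<xi> \<xi>"
proof -
  have l1: "linear (\<lambda>w. f'' w v)" for v
    using assms unfolding has_second_derivative_def by (meson has_derivative_linear)
  have l2: "linear (f'' w)" for w
    using assms by (rule has_second_derivative_linear_right)
  have \<xi>: "\<xi> = (\<Sum>i\<in>UNIV. \<xi> $ i *\<^sub>R axis i 1)"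
    using basis_expansion[of \<xi>] by (simp add: scalar_mult_eq_scaleR)
  have "f'' \<xi> \<xi> = (\<Sum>p\<in>UNIV. \<xi> $ p * f'' (axis p 1) \<xi>)"
    by (subst \<xi>, subst linear_sum[OF l1]) (simp add: linear_scale[OF l1])
  also have "\<dots> = (\<Sum>p\<in>UNIV. \<xi> $ p * (\<Sum>r\<in>UNIV. \<xi> $ r * f'' (axis p 1) (axis r 1)))"
    by (subst \<xi>, subst linear_sum[OF l2]) (simp add: linear_scale[OF l2])
  also have "\<dots> = d2 f x \<xi>"
    unfolding d2_def partial_partial_eq[OF assms] by (simp add: sum_distrib_left algebra_simps)
  finally show ?thesis ..
qed

lemma twice_differentiable_at_linear: "bounded_linear f \<Longrightarrow> twice_differentiable_at f x"
  unfolding twice_differentiable_at_def using has_second_derivative_linear by blast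

lemma twice_differentiable_at_mult:
  "twice_differentiable_at f x \<Longrightarrow> twice_differentiable_at g x \<Longrightarrow>
    twice_differentiable_at (\<lambda>y. f y * g y) x"
  unfolding twice_differentiable_at_def using has_second_derivative_mult by blast

lemma twice_differentiable_at_prod:
  "finite A \<Longrightarrow> (\<And>i. i \<in> A \<Longrightarrow> twice_differentiable_at (f i) x) \<Longrightarrow>
    twice_differentiable_at (\<lambda>y. \<Prod>i\<in>A. f i y) x"
  by (induction A rule: finite_induct)
     (auto intro: twice_differentiable_at_mult has_second_derivative_const
       simp: twice_differentiable_at_def[of "\<lambda>y. 1"])

lemma twice_differentiable_at_sum:
  assumes "finite A" "\<And>i. i \<in> A \<Longrightarrow> twice_differentiable_at (f i) x"
  shows "twice_differentiable_at (\<lambda>y. \<Sum>i\<in>A. f i y) x"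
    and "d2 (\<lambda>y. \<Sum>i\<in>A. f i y) x v = (\<Sum>i\<in>A. d2 (f i) x v)"
proof -
  have "\<forall>i\<in>A. \<exists>f'_i f''_i. has_second_derivative (f i) f'_i f''_i x"
    using assms(2) unfolding twice_differentiable_at_def by blast
  then obtain f' f'' where f: "\<And>i. i \<in> A \<Longrightarrow> has_second_derivative (f i) (f' i) (f'' i) x"
    by metis
  have sum: "has_second_derivative (\<lambda>y. \<Sum>i\<in>A. f i y) (\<lambda>y v. \<Sum>i\<in>A. f' i y v)
      (\<lambda>w v. \<Sum>i\<in>A. f'' i w v) x"
    using assms(1) f by (rule has_second_derivative_sum)
  then show "twice_differentiable_at (\<lambda>y. \<Sum>i\<in>A. f i y) x"
    unfolding twice_differentiable_at_def by blast
  show "d2 (\<lambda>y. \<Sum>i\<in>A. f i y) x v = (\<Sum>i\<in>A. d2 (f i) x v)"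
    unfolding d2_eq[OF sum] by (intro sum.cong refl) (simp add: d2_eq[OF f])
qed

lemma twice_differentiable_at_cmult:
  assumes "twice_differentiable_at f x"
  shows "twice_differentiable_at (\<lambda>y. c * f y) x"
    and "d2 (\<lambda>y. c * f y) x v = c * d2 f x v"
proof -
  obtain f' f'' where f: "has_second_derivative f f' f'' x"
    using assms unfolding twice_differentiable_at_def by blast
  then show "twice_differentiable_at (\<lambda>y. c * f y) x"
    unfolding twice_differentiable_at_def by (blast intro: has_second_derivative_cmult)
  show "d2 (\<lambda>y. c * f y) x v = c * d2 f x v"
    using d2_eq[OF has_second_derivative_cmult[OF f]] d2_eq[OF f] by simp
qed

lemma d2_transform:
  assumes "twice_differentiable_at g x" "\<forall>\<^sub>F y in nhds x. f y = g y"
  shows "d2 f x v = d2 g x v"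
proof -
  obtain g' g'' where g: "has_second_derivative g g' g'' x"
    using assms(1) unfolding twice_differentiable_at_def by blast
  show ?thesis
    using d2_eq[OF has_second_derivative_transform[OF g assms(2)]] d2_eq[OF g] by simp
qed

lemma twice_differentiable_at_compose_linear:
  assumes "bounded_linear L" "twice_differentiable_at f (L x)"
  shows "twice_differentiable_at (\<lambda>y. f (L y)) x"
    and "d2 (\<lambda>y. f (L y)) x v = d2 f (L x) (L v)"
proof -
  obtain f' f'' where f: "has_second_derivative f f' f'' (L x)"
    using assms(2) unfolding twice_differentiable_at_def by blast
  note fL = has_second_derivative_compose_linear[OF assms(1) f]
  then show "twice_differentiable_at (\<lambda>y. f (L y)) x"
    unfolding twice_differentiable_at_def by blast
  show "d2 (\<lambda>y. f (L y)) x v = d2 f (L x) (L v)"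
    using d2_eq[OF fL] d2_eq[OF f] by simp
qed

lemma twice_differentiable_at_sigma: "twice_differentiable_at (sigma m) x"
proof -
  have "twice_differentiable_at (\<lambda>y. \<Sum>S | card S = m. \<Prod>i\<in>S. y $ i) x"
    by (intro twice_differentiable_at_sum twice_differentiable_at_prod twice_differentiable_at_linear)
       (auto simp: bounded_linear_vec_nth)
  then show ?thesis
    unfolding sigma_def[abs_def] .
qed

lemma twice_differentiable_at_q:
  assumes "sigma (k - 1) x \<noteq> 0"
  shows "twice_differentiable_at (q k) x"
proof -
  obtain s' s'' t' t'' where "has_second_derivative (sigma k) s' s'' x"
    and "has_second_derivative (sigma (k - 1)) t' t'' x"
    using twice_differentiable_at_sigma unfolding twice_differentiable_at_def by metis
  from has_second_derivative_mult[OF this(1) has_second_derivative_inverse[OF this(2) assms]]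
  show ?thesis
    unfolding twice_differentiable_at_def q_def[abs_def] divide_inverse by blast
qed

text \<open>The left-hand side is what the product and inverse rules produce for \<open>f (g (f + g)\<^sup>-\<^sup>1)\<close>,
  with \<open>F = f x\<close>, \<open>G = g x\<close>, \<open>a = f' x v\<close>, \<open>b = g' x v\<close>, \<open>A = f'' v v\<close>, \<open>B = g'' v v\<close>.\<close>

lemma harmonic_second_derivative_identity:
  fixes F G a b A B :: real
  assumes "F + G \<noteq> 0"
  shows "a * (G * (- (a + b) / (F + G)\<^sup>2) + b * inverse (F + G))
       + a * (G * (- (a + b) / (F + G)\<^sup>2) + b * inverse (F + G))
       + F * (b * (- (a + b) / (F + G)\<^sup>2) + b * (- (a + b) / (F + G)\<^sup>2)
              + G * ((2 * (a + b) * (a + b) - (F + G) * (A + B)) / (F + G) ^ 3)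
              + inverse (F + G) * B)
       + G * inverse (F + G) * A
     = (G\<^sup>2 * A + F\<^sup>2 * B) / (F + G)\<^sup>2 - 2 * (G * a - F * b)\<^sup>2 / (F + G) ^ 3"
proof -
  define S where "S = F + G"
  have G: "G = S - F"
    unfolding S_def by simp
  show ?thesis
    using assms unfolding S_def[symmetric] unfolding G
    by (simp add: field_simps power2_eq_square power3_eq_cube)
qed

text \<open>\<open>f g / (f + g)\<close> is the reciprocal of \<open>1/f + 1/g\<close>, whence the name.\<close>

lemma has_second_derivative_harmonic:
  assumes f: "has_second_derivative f f' f'' x" and g: "has_second_derivative g g' g'' x"
    and nz: "f x + g x \<noteq> 0"
  obtains h' h'' where "has_second_derivative (\<lambda>y. f y * g y / (f y + g y)) h' h'' x"
    and "\<And>v. h'' v v = ((g x)\<^sup>2 * f'' v v + (f x)\<^sup>2 * g'' v v) / (f x + g x)\<^sup>2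
      - 2 * (g x * f' x v - f x * g' x v)\<^sup>2 / (f x + g x) ^ 3"
proof -
  have "(\<lambda>y. f y * g y / (f y + g y)) = (\<lambda>y. f y * (g y * inverse (f y + g y)))"
    by (simp add: fun_eq_iff divide_inverse)
  from has_second_derivative_mult[OF f has_second_derivative_mult[OF g
      has_second_derivative_inverse[OF has_second_derivative_add[OF f g] nz]], folded this]
  show ?thesis
    by (rule that) (rule harmonic_second_derivative_identity[OF nz])
qed

lemma d2_linear: "bounded_linear f \<Longrightarrow> d2 f x v = 0"
  using d2_eq[OF has_second_derivative_linear] by blast

lemma d2_harmonic:
  fixes f g :: "real^'n \<Rightarrow> real"
  assumes "twice_differentiable_at f x" "twice_differentiable_at g x" "f x + g x > 0"
  shows "twice_differentiable_at (\<lambda>y. f y * g y / (f y + g y)) x"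
    and "d2 (\<lambda>y. f y * g y / (f y + g y)) x v
      \<le> ((g x)\<^sup>2 * d2 f x v + (f x)\<^sup>2 * d2 g x v) / (f x + g x)\<^sup>2"
proof -
  obtain f' f'' g' g'' where f: "has_second_derivative f f' f'' x"
    and g: "has_second_derivative g g' g'' x"
    using assms(1,2) unfolding twice_differentiable_at_def by blast
  have "f x + g x \<noteq> 0"
    using assms(3) by simp
  then obtain h' h'' where h: "has_second_derivative (\<lambda>y. f y * g y / (f y + g y)) h' h'' x"
    and h'': "\<And>v. h'' v v = ((g x)\<^sup>2 * f'' v v + (f x)\<^sup>2 * g'' v v) / (f x + g x)\<^sup>2
      - 2 * (g x * f' x v - f x * g' x v)\<^sup>2 / (f x + g x) ^ 3"
    using has_second_derivative_harmonic[OF f g] by blast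
  from h show "twice_differentiable_at (\<lambda>y. f y * g y / (f y + g y)) x"
    unfolding twice_differentiable_at_def by blast
  have "2 * (g x * f' x v - f x * g' x v)\<^sup>2 / (f x + g x) ^ 3 \<ge> 0"
    using assms(3) by simp
  then show "d2 (\<lambda>y. f y * g y / (f y + g y)) x v
      \<le> ((g x)\<^sup>2 * d2 f x v + (f x)\<^sup>2 * d2 g x v) / (f x + g x)\<^sup>2"
    unfolding d2_eq[OF h] d2_eq[OF f] d2_eq[OF g] h'' by linarith
qed

lemma has_second_derivative_norm_sq:
  fixes P :: "'a::real_normed_vector \<Rightarrow> 'b::real_inner"
  assumes "bounded_linear P"
  shows "has_second_derivative (\<lambda>y. (norm (P y))\<^sup>2) (\<lambda>y v. 2 * (P y \<bullet> P v)) (\<lambda>w v. 2 * (P w \<bullet> P v)) x"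
  unfolding has_second_derivative_def
proof
  have P: "(P has_derivative P) (at y)" for y
    using assms by (rule bounded_linear_imp_has_derivative)
  have "((\<lambda>y. P y \<bullet> P y) has_derivative (\<lambda>v. 2 * (P y \<bullet> P v))) (at y)" for y
    using has_derivative_inner[OF P P] by (rule has_derivative_eq_rhs) (simp add: fun_eq_iff inner_commute)
  then show "\<forall>\<^sub>F y in nhds x. ((\<lambda>y. (norm (P y))\<^sup>2) has_derivative (\<lambda>v. 2 * (P y \<bullet> P v))) (at y)"
    by (simp add: power2_norm_eq_inner)
  show "\<forall>v. ((\<lambda>y. 2 * (P y \<bullet> P v)) has_derivative (\<lambda>w. 2 * (P w \<bullet> P v))) (at x)"
    using assms by (intro allI bounded_linear_imp_has_derivative bounded_linear_const_mult
        bounded_linear_inner_left_comp)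
qed

text \<open>The Hessian of a squared norm divided by a linear form is a square; this is the
  convexity of \<open>|P y|\<^sup>2 / l y\<close> on \<open>{l > 0}\<close>.\<close>

lemma has_second_derivative_norm_sq_over_linear:
  fixes P :: "'a::real_normed_vector \<Rightarrow> 'b::real_inner" and l :: "'a \<Rightarrow> real"
  assumes "bounded_linear P" "bounded_linear l" "l x \<noteq> 0"
  obtains \<phi>' \<phi>'' where "has_second_derivative (\<lambda>y. (norm (P y))\<^sup>2 / l y) \<phi>' \<phi>'' x"
    and "\<And>v. \<phi>'' v v = 2 * (norm (P v - (l v / l x) *\<^sub>R P x))\<^sup>2 / l x"
proof -
  have "(\<lambda>y. (norm (P y))\<^sup>2 / l y) = (\<lambda>y. (norm (P y))\<^sup>2 * inverse (l y))"
    by (simp add: fun_eq_iff divide_inverse)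
  from has_second_derivative_mult[OF has_second_derivative_norm_sq[OF assms(1)]
      has_second_derivative_inverse[OF has_second_derivative_linear[OF assms(2)] assms(3)], folded this]
  show ?thesis
  proof (rule that)
    fix v
    show "2 * (P x \<bullet> P v) * (- l v / (l x)\<^sup>2) + 2 * (P x \<bullet> P v) * (- l v / (l x)\<^sup>2)
        + (norm (P x))\<^sup>2 * ((2 * l v * l v - l x * 0) / l x ^ 3) + inverse (l x) * (2 * (P v \<bullet> P v))
        = 2 * (norm (P v - (l v / l x) *\<^sub>R P x))\<^sup>2 / l x"
      using assms(3) unfolding power2_norm_eq_inner
      by (simp add: inner_diff_left inner_diff_right inner_commute field_simps power2_eq_square power3_eq_cube)
  qed
qed

section \<open>The second derivative of \<open>q\<^sub>2\<close>\<close>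

lemma norm_diff_proj_le:
  fixes u p :: "'a::real_inner"
  shows "norm (u - ((u \<bullet> p) / (norm p)\<^sup>2) *\<^sub>R p) \<le> norm (u - t *\<^sub>R p)"
proof (cases "p = 0")
  case False
  define c where "c = (u \<bullet> p) / (norm p)\<^sup>2"
  have expand: "(norm (u - s *\<^sub>R p))\<^sup>2 = (norm u)\<^sup>2 - 2 * s * (u \<bullet> p) + s\<^sup>2 * (norm p)\<^sup>2" for s
    unfolding power2_norm_eq_inner
    by (simp add: inner_diff_left inner_diff_right inner_commute power2_eq_square)
  have "u \<bullet> p = c * (norm p)\<^sup>2"
    unfolding c_def using False by simp
  then have "(norm (u - t *\<^sub>R p))\<^sup>2 - (norm (u - c *\<^sub>R p))\<^sup>2 = (t - c)\<^sup>2 * (norm p)\<^sup>2"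
    unfolding expand by (simp add: power2_eq_square algebra_simps)
  then have "(norm (u - c *\<^sub>R p))\<^sup>2 \<le> (norm (u - t *\<^sub>R p))\<^sup>2"
    by (metis diff_ge_0_iff_ge zero_le_mult_iff zero_le_power2)
  then show ?thesis
    unfolding c_def by (simp add: power2_le_iff_abs_le)
qed simp

lemma bounded_linear_zero_out: "bounded_linear (zero_out I)"
  by (auto simp: zero_out_def vec_eq_iff linear_conv_bounded_linear[symmetric] intro!: linearI)

lemma sigma_del_1: "sigma_del 1 I y = (\<Sum>i\<in>UNIV - I. y $ i)"
  using esym_1[of "UNIV - I" "\<lambda>i. y $ i"] by (simp add: sigma_del_eq_esym)

lemma bounded_linear_sigma_del_1: "bounded_linear (sigma_del 1 I)"
  unfolding sigma_del_1[abs_def] by (intro bounded_linear_sum bounded_linear_vec_nth)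

lemma q_del_2_eq:
  "q_del 2 I y = sigma_del 1 I y / 2 - (norm (zero_out I y))\<^sup>2 / (2 * sigma_del 1 I y)"
proof -
  have "(norm (zero_out I y))\<^sup>2 = (\<Sum>i\<in>UNIV - I. (y $ i)\<^sup>2)"
    unfolding power2_norm_eq_inner inner_vec_def
    by (rule sum.mono_neutral_cong_right) (auto simp: zero_out_def power2_eq_square)
  then have "sigma_del 2 I y = ((sigma_del 1 I y)\<^sup>2 - (norm (zero_out I y))\<^sup>2) / 2"
    unfolding sigma_del_1 sigma_del_eq_esym[of 2] using esym_2[of "UNIV - I" "\<lambda>i. y $ i"] by simp
  then show ?thesis
    unfolding q_del_def by (cases "sigma_del 1 I y = 0") (simp_all add: field_simps power2_eq_square)
qed

lemma d2_q_del_2: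
  assumes "sigma_del 1 I \<kappa> \<noteq> 0"
  shows "- d2 (q_del 2 I) \<kappa> \<xi> = (norm (zero_out I \<xi> -
    (sigma_del 1 I \<xi> / sigma_del 1 I \<kappa>) *\<^sub>R zero_out I \<kappa>))\<^sup>2 / sigma_del 1 I \<kappa>"
proof -
  obtain \<phi>' \<phi>'' where \<phi>: "has_second_derivative (\<lambda>y. (norm (zero_out I y))\<^sup>2 / sigma_del 1 I y) \<phi>' \<phi>'' \<kappa>"
    and \<phi>'': "\<And>v. \<phi>'' v v = 2 * (norm (zero_out I v -
      (sigma_del 1 I v / sigma_del 1 I \<kappa>) *\<^sub>R zero_out I \<kappa>))\<^sup>2 / sigma_del 1 I \<kappa>"
    using has_second_derivative_norm_sq_over_linear[OF bounded_linear_zero_out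
        bounded_linear_sigma_del_1 assms] by blast
  note q2 = has_second_derivative_add[OF
      has_second_derivative_cmult[OF has_second_derivative_linear[OF bounded_linear_sigma_del_1[of I]], of "1 / 2"]
      has_second_derivative_cmult[OF \<phi>, of "- 1 / 2"]]
  have "q_del 2 I = (\<lambda>y. 1 / 2 * sigma_del 1 I y + - 1 / 2 * ((norm (zero_out I y))\<^sup>2 / sigma_del 1 I y))"
    by (simp add: fun_eq_iff q_del_2_eq)
  then show ?thesis
    using d2_eq[OF q2, of \<xi>] \<phi>''[of \<xi>] by simp
qed

lemma neg_d2_q_del_2_ge:
  assumes "\<kappa> \<in> garding_cone (l + 2)" "card I = l"
  shows "- d2 (q_del 2 I) \<kappa> \<xi> \<ge> (norm (perp_part I \<kappa> \<xi>))\<^sup>2 / sigma_del 1 I \<kappa>"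
proof -
  have pos: "sigma_del 1 I \<kappa> > 0"
    using sigma_del_pos[OF assms(1)] assms(2) by simp
  have "norm (perp_part I \<kappa> \<xi>) \<le> norm (zero_out I \<xi> - (sigma_del 1 I \<xi> / sigma_del 1 I \<kappa>) *\<^sub>R zero_out I \<kappa>)"
    unfolding perp_part_def by (rule norm_diff_proj_le)
  then show ?thesis
    unfolding d2_q_del_2[OF pos[THEN less_imp_neq, symmetric]] using pos
    by (intro divide_right_mono power_mono) auto
qed

section \<open>The second derivative of \<open>q\<^sub>k\<^sub>+\<^sub>1\<close>\<close>

lemma esym_remove_div:
  assumes "finite K" "i \<in> K" "1 \<le> k" "esym (K - {i}) x (k - 1) \<noteq> 0"
  shows "x i + esym (K - {i}) x k / esym (K - {i}) x (k - 1) = esym K x k / esym (K - {i}) x (k - 1)"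
  using esym_remove[OF assms(1,2), of x "k - 1"] assms(3,4) by (simp add: field_simps)

lemma esym_Suc_div_eq_sum:
  assumes "finite K" "1 \<le> k" "\<And>i. i \<in> K \<Longrightarrow> esym (K - {i}) x (k - 1) \<noteq> 0"
    and "\<And>i. i \<in> K \<Longrightarrow> g i = esym (K - {i}) x k / esym (K - {i}) x (k - 1)"
  shows "esym K x (Suc k) / esym K x k = (\<Sum>i\<in>K. x i * g i / (x i + g i)) / real (Suc k)"
proof -
  have "x i * g i / (x i + g i) = x i * esym (K - {i}) x k / esym K x k" if "i \<in> K" for i
  proof -
    let ?e = "esym (K - {i}) x k" and ?e' = "esym (K - {i}) x (k - 1)"
    have "x i * g i / (x i + g i) = x i * (?e / ?e') / (esym K x k / ?e')"
      using esym_remove_div[OF assms(1) that assms(2) assms(3)[OF that]] assms(4)[OF that] by simp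
    also have "\<dots> = x i * ?e / esym K x k"
      using assms(3)[OF that] by simp
    finally show ?thesis .
  qed
  then have "(\<Sum>i\<in>K. x i * g i / (x i + g i)) = (\<Sum>i\<in>K. x i * esym (K - {i}) x k) / esym K x k"
    by (simp add: sum_divide_distrib)
  also have "\<dots> = real (Suc k) * esym K x (Suc k) / esym K x k"
    using esym_euler[OF assms(1)] by simp
  finally show ?thesis
    by simp
qed

lemma q_del_eq_q_zero_out: "q_del k I y = q k (zero_out I y)"
  unfolding q_del_def q_def sigma_del_def ..

lemma q_del_Suc_eq_sum:
  assumes "1 \<le> k" "\<forall>i\<in>UNIV - {i1}. sigma_del (k - 1) {i1, i} y \<noteq> 0"
  shows "q_del (Suc k) {i1} y
    = (\<Sum>i\<in>UNIV - {i1}. y $ i * q_del k {i1, i} y / (y $ i + q_del k {i1, i} y)) / real (Suc k)"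
proof -
  have "UNIV - {i1, i} = UNIV - {i1} - {i}" for i
    by auto
  then show ?thesis
    unfolding q_del_def
    using esym_Suc_div_eq_sum[of "UNIV - {i1}" k "\<lambda>j. y $ j" "\<lambda>i. q_del k {i1, i} y"] assms
    by (simp add: sigma_del_eq_esym q_del_def)
qed

lemma eventually_sigma_del_neq_0:
  assumes "sigma_del m I \<kappa> \<noteq> 0"
  shows "\<forall>\<^sub>F y in nhds \<kappa>. sigma_del m I y \<noteq> 0"
proof -
  have "((\<lambda>y. esym (UNIV - I) (\<lambda>i. y $ i) m) \<longlongrightarrow> esym (UNIV - I) (\<lambda>i. \<kappa> $ i) m) (at \<kappa>)"
    by (intro tendsto_esym tendsto_vec_nth tendsto_ident_at) simp
  then have "\<forall>\<^sub>F y in at \<kappa>. sigma_del m I y \<noteq> 0"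
    using assms unfolding sigma_del_eq_esym by (rule tendsto_imp_eventually_ne)
  then show ?thesis
    using assms by (simp add: eventually_nhds_conv_at)
qed

lemma eventually_q_del_Suc_eq_sum:
  assumes "1 \<le> k" "\<And>i. i \<noteq> i1 \<Longrightarrow> sigma_del (k - 1) {i1, i} \<kappa> \<noteq> 0"
  shows "\<forall>\<^sub>F y in nhds \<kappa>. q_del (Suc k) {i1} y
    = (\<Sum>i\<in>UNIV - {i1}. y $ i * q_del k {i1, i} y / (y $ i + q_del k {i1, i} y)) / real (Suc k)"
proof -
  have "\<forall>\<^sub>F y in nhds \<kappa>. \<forall>i\<in>UNIV - {i1}. sigma_del (k - 1) {i1, i} y \<noteq> 0"
    using assms(2) by (intro eventually_ball_finite ballI eventually_sigma_del_neq_0) auto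
  then show ?thesis
    by (rule eventually_mono) (rule q_del_Suc_eq_sum[OF assms(1)])
qed

lemma component_add_q_del_pos:
  assumes "1 \<le> k" "\<kappa> \<in> garding_cone (k + 1)" "i \<noteq> i1"
  shows "\<kappa> $ i + q_del k {i1, i} \<kappa> > 0"
proof -
  have pos: "sigma_del (k - 1) {i1, i} \<kappa> > 0" "sigma_del k {i1} \<kappa> > 0"
    using sigma_del_pos[OF assms(2), of "k - 1" "{i1, i}"] sigma_del_pos[OF assms(2), of k "{i1}"] assms(1,3)
    by simp_all
  have "UNIV - {i1, i} = (UNIV - {i1}) - {i}"
    by auto
  then have "\<kappa> $ i + q_del k {i1, i} \<kappa> = sigma_del k {i1} \<kappa> / sigma_del (k - 1) {i1, i} \<kappa>"
    using esym_remove_div[of "UNIV - {i1}" i k "\<lambda>j. \<kappa> $ j"] pos(1) assms(1,3)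
    by (simp add: q_del_def sigma_del_eq_esym)
  then show ?thesis
    using pos by simp
qed

lemma d2_component_harmonic_q_del:
  assumes "sigma_del (k - 1) I \<kappa> \<noteq> 0" "\<kappa> $ i + q_del k I \<kappa> > 0"
  shows "twice_differentiable_at (\<lambda>y. y $ i * q_del k I y / (y $ i + q_del k I y)) \<kappa>"
    and "d2 (\<lambda>y. y $ i * q_del k I y / (y $ i + q_del k I y)) \<kappa> \<xi>
      \<le> (\<kappa> $ i)\<^sup>2 * d2 (q k) (zero_out I \<kappa>) (zero_out I \<xi>) / (\<kappa> $ i + q_del k I \<kappa>)\<^sup>2"
proof -
  have "sigma (k - 1) (zero_out I \<kappa>) \<noteq> 0"
    using assms(1) unfolding sigma_del_def .
  note q = twice_differentiable_at_compose_linear[OF bounded_linear_zero_out twice_differentiable_at_q[OF this]]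
  have coord: "twice_differentiable_at (\<lambda>y. y $ i) \<kappa>" "d2 (\<lambda>y. y $ i) \<kappa> \<xi> = 0"
    by (simp_all add: twice_differentiable_at_linear d2_linear bounded_linear_vec_nth)
  show "twice_differentiable_at (\<lambda>y. y $ i * q_del k I y / (y $ i + q_del k I y)) \<kappa>"
    using d2_harmonic(1)[OF coord(1) q(1) assms(2)[unfolded q_del_eq_q_zero_out]]
    by (simp add: q_del_eq_q_zero_out)
  show "d2 (\<lambda>y. y $ i * q_del k I y / (y $ i + q_del k I y)) \<kappa> \<xi>
      \<le> (\<kappa> $ i)\<^sup>2 * d2 (q k) (zero_out I \<kappa>) (zero_out I \<xi>) / (\<kappa> $ i + q_del k I \<kappa>)\<^sup>2"
    using d2_harmonic(2)[OF coord(1) q(1) assms(2)[unfolded q_del_eq_q_zero_out], of \<xi>] q(2) coord(2)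
    by (simp add: q_del_eq_q_zero_out)
qed

lemma neg_d2_q_del_Suc_ge:
  assumes "1 \<le> k" "\<kappa> \<in> garding_cone (k + 2)"
  shows "- d2 (q_del (k + 1) {i1}) \<kappa> \<xi> \<ge>
    - (\<Sum>i\<in>UNIV - {i1}. (\<kappa> $ i)\<^sup>2 * d2 (q k) (zero_out {i1, i} \<kappa>) (zero_out {i1, i} \<xi>)
        / (real (k + 1) * (q_del k {i1, i} \<kappa> + \<kappa> $ i)\<^sup>2))"
proof -
  define c where "c = 1 / real (Suc k)"
  define h where "h i y = y $ i * q_del k {i1, i} y / (y $ i + q_del k {i1, i} y)" for i y
  have cone: "\<kappa> \<in> garding_cone (k + 1)"
    using assms(2) by (simp add: garding_cone_def)
  have pos: "sigma_del (k - 1) {i1, i} \<kappa> \<noteq> 0" if "i \<noteq> i1" for i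
    using sigma_del_pos[OF assms(2), of "k - 1" "{i1, i}"] that by simp
  have h: "twice_differentiable_at (h i) \<kappa>"
    "d2 (h i) \<kappa> \<xi> \<le> (\<kappa> $ i)\<^sup>2 * d2 (q k) (zero_out {i1, i} \<kappa>) (zero_out {i1, i} \<xi>)
      / (\<kappa> $ i + q_del k {i1, i} \<kappa>)\<^sup>2" if "i \<in> UNIV - {i1}" for i
    using d2_component_harmonic_q_del[OF pos component_add_q_del_pos[OF assms(1) cone]] that
    unfolding h_def[abs_def] by auto
  have "\<forall>\<^sub>F y in nhds \<kappa>. q_del (k + 1) {i1} y = c * (\<Sum>i\<in>UNIV - {i1}. h i y)"
    using eventually_q_del_Suc_eq_sum[OF assms(1) pos] by (simp add: h_def c_def)
  then have "d2 (q_del (k + 1) {i1}) \<kappa> \<xi> = d2 (\<lambda>y. c * (\<Sum>i\<in>UNIV - {i1}. h i y)) \<kappa> \<xi>"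
    using h(1) by (intro d2_transform twice_differentiable_at_cmult twice_differentiable_at_sum) auto
  also have "\<dots> = c * (\<Sum>i\<in>UNIV - {i1}. d2 (h i) \<kappa> \<xi>)"
    using twice_differentiable_at_cmult(2)[OF twice_differentiable_at_sum(1)[of "UNIV - {i1}" h]]
      twice_differentiable_at_sum(2)[of "UNIV - {i1}" h] h(1) by simp
  also have "\<dots> \<le> c * (\<Sum>i\<in>UNIV - {i1}. (\<kappa> $ i)\<^sup>2 * d2 (q k) (zero_out {i1, i} \<kappa>)
      (zero_out {i1, i} \<xi>) / (\<kappa> $ i + q_del k {i1, i} \<kappa>)\<^sup>2)"
    using h(2) by (intro mult_left_mono sum_mono) (auto simp: c_def)
  finally show ?thesis
    by (simp add: c_def sum_divide_distrib sum_distrib_left add.commute)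
qed

theorem lemma2p17:
  fixes \<kappa> \<xi> :: "real^'n"
  shows
  "(\<forall>(l::nat) (I::'n set).
       \<kappa> \<in> garding_cone (l + 2) \<and> card I = l \<longrightarrow>
       - d2 (q_del 2 I) \<kappa> \<xi> \<ge> (norm (perp_part I \<kappa> \<xi>))^2 / sigma_del 1 I \<kappa>)
   \<and>
   (\<forall>(k::nat) (i1::'n).
       1 \<le> k \<and> \<kappa> \<in> garding_cone (k + 2) \<longrightarrow>
       - d2 (q_del (k + 1) {i1}) \<kappa> \<xi> \<ge>
         - (\<Sum>i\<in>UNIV - {i1}.
              (\<kappa> $ i)^2 * d2 (q k) (zero_out {i1, i} \<kappa>) (zero_out {i1, i} \<xi>)
              / (real (k + 1) * (q_del k {i1, i} \<kappa> + \<kappa> $ i)^2)))"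
  using neg_d2_q_del_2_ge neg_d2_q_del_Suc_ge by blast

end
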